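(* Fix $\rho\in(0,1)$. The set of parameters $(\pi,\gamma)\in\Theta$ for which some optimal solution of the exploit LP satisfies (a) the fairness constraint $\alpha_{x,1}=\alpha_{x,0}$ for all $x$, respectively (b) the masking constraint $\sum_{x=1}^k\Pr(X=x)(\alpha_{x,1}-\alpha_{x,0})=0$, has Lebesgue measure zero in $\Theta$.
   Context: Fix an integer $k\ge 2$, $X\in\{1,\dots,k\}$, $P\in\{0,1\}$. The parameter space is $\Theta=\{(\pi,\gamma):\pi_{x,p}>0,\ \sum_{x,p}\pi_{x,p}=1,\ \gamma\in[0,1]^{2k}\}$ with Lebesgue measure, where $\pi_{x,p}=\Pr(X=x,P=p)$, $\Pr(X=x)=\pi_{x,0}+\pi_{x,1}$ and $\gamma_{x,p}=\mathbb{E}[Y\mid x,p]$. The exploit LP is: maximize $\mathcal{W}(\alpha)=\sum_{x,p}\gamma_{x,p}\alpha_{x,p}\pi_{x,p}$ over $\alpha\in[0,1]^{2k}$ subject to $\sum_{x,p}\alpha_{x,p}\pi_{x,p}=\rho$. *)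

theory Defs
  imports "HOL-Analysis.Analysis"
begin

text \<open>Cells (x,p) with x in {1..k} and p in {0,1}; p = 0 is False, p = 1 is True.\<close>
definition cells :: "nat \<Rightarrow> (nat \<times> bool) set" where
  "cells k = {1..k} \<times> (UNIV :: bool set)"

definition Theta :: "nat \<Rightarrow> (nat \<times> bool \<Rightarrow> real) \<Rightarrow> (nat \<times> bool \<Rightarrow> real) \<Rightarrow> bool" where
  "Theta k \<pi> \<gamma> \<longleftrightarrow> (\<forall>c\<in>cells k. 0 < \<pi> c \<and> 0 \<le> \<gamma> c \<and> \<gamma> c \<le> 1) \<and> (\<Sum>c\<in>cells k. \<pi> c) = 1"

definition feasible :: "nat \<Rightarrow> (nat \<times> bool \<Rightarrow> real) \<Rightarrow> real \<Rightarrow> (nat \<times> bool \<Rightarrow> real) \<Rightarrow> bool" where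
  "feasible k \<pi> \<rho> \<alpha> \<longleftrightarrow> (\<forall>c\<in>cells k. 0 \<le> \<alpha> c \<and> \<alpha> c \<le> 1) \<and> (\<Sum>c\<in>cells k. \<alpha> c * \<pi> c) = \<rho>"

definition welfare :: "nat \<Rightarrow> (nat \<times> bool \<Rightarrow> real) \<Rightarrow> (nat \<times> bool \<Rightarrow> real) \<Rightarrow> (nat \<times> bool \<Rightarrow> real) \<Rightarrow> real" where
  "welfare k \<pi> \<gamma> \<alpha> = (\<Sum>c\<in>cells k. \<gamma> c * \<alpha> c * \<pi> c)"

definition optimal :: "nat \<Rightarrow> (nat \<times> bool \<Rightarrow> real) \<Rightarrow> (nat \<times> bool \<Rightarrow> real) \<Rightarrow> real \<Rightarrow> (nat \<times> bool \<Rightarrow> real) \<Rightarrow> bool" where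
  "optimal k \<pi> \<gamma> \<rho> \<alpha> \<longleftrightarrow> feasible k \<pi> \<rho> \<alpha> \<and>
     (\<forall>\<beta>. feasible k \<pi> \<rho> \<beta> \<longrightarrow> welfare k \<pi> \<gamma> \<beta> \<le> welfare k \<pi> \<gamma> \<alpha>)"

definition fair :: "nat \<Rightarrow> (nat \<times> bool \<Rightarrow> real) \<Rightarrow> bool" where
  "fair k \<alpha> \<longleftrightarrow> (\<forall>x\<in>{1..k}. \<alpha> (x, True) = \<alpha> (x, False))"

definition masked :: "nat \<Rightarrow> (nat \<times> bool \<Rightarrow> real) \<Rightarrow> (nat \<times> bool \<Rightarrow> real) \<Rightarrow> bool" where
  "masked k \<pi> \<alpha> \<longleftrightarrow>
     (\<Sum>x=1..k. (\<pi> (x, False) + \<pi> (x, True)) * (\<alpha> (x, True) - \<alpha> (x, False))) = 0"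

text \<open>Coordinates for Lebesgue measure on Theta: the free coordinates of pi are all
  cells except (k,1) (whose value is 1 minus the others), plus all coordinates of gamma.\<close>
definition param_index :: "nat \<Rightarrow> ((nat \<times> bool) + (nat \<times> bool)) set" where
  "param_index k = Inl ` (cells k - {(k, True)}) \<union> Inr ` cells k"

definition pi_of :: "nat \<Rightarrow> ((nat \<times> bool) + (nat \<times> bool) \<Rightarrow> real) \<Rightarrow> nat \<times> bool \<Rightarrow> real" where
  "pi_of k \<theta> c = (if c = (k, True) then 1 - (\<Sum>d\<in>cells k - {(k, True)}. \<theta> (Inl d))
                   else \<theta> (Inl c))"

definition gamma_of :: "((nat \<times> bool) + (nat \<times> bool) \<Rightarrow> real) \<Rightarrow> nat \<times> bool \<Rightarrow> real" where
  "gamma_of \<theta> c = \<theta> (Inr c)"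

definition param_lebesgue :: "nat \<Rightarrow> ((nat \<times> bool) + (nat \<times> bool) \<Rightarrow> real) measure" where
  "param_lebesgue k = PiM (param_index k) (\<lambda>_. lborel)"

end

theory Submission
  imports Defs "HOL-Computational_Algebra.Polynomial"
begin

(*
  Off a null set of parameters the rewards gamma are pairwise distinct and no set of cells has
  probability mass exactly rho.  For such parameters an exchange argument (move mass from a
  worse to a better cell) shows that an optimal alpha is 0 or 1 on all cells but one cell cs,
  where it is strictly fractional.  Fairness would give the partner cell of cs the same
  fractional value, which is impossible.  With H the cells where alpha = 1, feasibility fixes
  alpha cs = (rho - pi H) / pi cs, so masking becomes a quadratic polynomial equation in pi.
  Its derivative along some coordinate direction of the simplex is nonzero, so on that
  coordinate line it does not vanish identically; by Fubini, the points where a function that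
  is polynomial along coordinate lines vanishes, without vanishing on the whole line, form a
  null set.  Only finitely many H, cs and directions occur.
*)

definition nontrivial_line_zeros :: "(('i \<Rightarrow> real) \<Rightarrow> real) \<Rightarrow> 'i \<Rightarrow> ('i \<Rightarrow> real) set" where
  "nontrivial_line_zeros f i = {\<theta>. f \<theta> = 0 \<and> (\<exists>y. f (\<theta>(i := y)) \<noteq> 0)}"

lemma null_sets_PiM_lborel_zero_shift_nonzero:
  fixes f :: "('i \<Rightarrow> real) \<Rightarrow> real"
  assumes "finite I" "i \<in> I"
    and [measurable]: "f \<in> borel_measurable (PiM I (\<lambda>_. lborel))"
    and poly: "\<And>\<theta>. \<theta> \<in> space (PiM I (\<lambda>_. lborel)) \<Longrightarrow> \<exists>p. \<forall>y. f (\<theta>(i := y)) = poly p y"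
  shows "{\<theta>\<in>space (PiM I (\<lambda>_. lborel)). f \<theta> = 0 \<and> f (\<theta>(i := \<theta> i + d)) \<noteq> 0}
           \<in> null_sets (PiM I (\<lambda>_. lborel))"
    (is "?P \<in> null_sets ?M")
proof -
  define J where "J = I - {i}"
  have IJ: "I = insert i J" "i \<notin> J" "finite J"
    using assms(1,2) by (auto simp: J_def)
  have "(\<lambda>\<theta>. \<theta>(i := \<theta> i + d)) \<in> ?M \<rightarrow>\<^sub>M ?M"
    by (rule measurable_fun_upd[where J = I]) (use assms(2) in auto)
  then have [measurable]: "(\<lambda>\<theta>. f (\<theta>(i := \<theta> i + d))) \<in> borel_measurable ?M"
    by measurable
  have P_sets[measurable]: "?P \<in> sets ?M" by measurable
  have line_null: "(\<integral>\<^sup>+ y. indicator ?P (\<theta>(i := y)) \<partial>lborel) = 0"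
    if "\<theta> \<in> space (PiM J (\<lambda>_. lborel))" for \<theta>
  proof -
    have "\<theta>(i := 0) \<in> space ?M"
      using that IJ by (auto simp: space_PiM PiE_def extensional_def)
    then obtain p where p: "\<And>y. f (\<theta>(i := y)) = poly p y"
      using poly by fastforce
    have "{y. \<theta>(i := y) \<in> ?P} \<subseteq> {y. poly p y = 0 \<and> poly p (y + d) \<noteq> 0}"
      by (auto simp: p)
    moreover have "finite {y. poly p y = 0 \<and> poly p (y + d) \<noteq> 0}"
      by (cases "p = 0") (auto intro: finite_subset[OF _ poly_roots_finite])
    ultimately have "finite {y. \<theta>(i := y) \<in> ?P}"
      by (rule finite_subset)
    then have "AE y in lborel. y \<notin> {y. \<theta>(i := y) \<in> ?P}"
      by (intro AE_not_in countable_imp_null_set_lborel countable_finite)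
    then have "AE y in lborel. indicator ?P (\<theta>(i := y)) = (0::ennreal)"
      by eventually_elim simp
    then show ?thesis
      by (simp add: nn_integral_cong_AE)
  qed
  interpret product_sigma_finite "\<lambda>_. lborel" by standard
  have "emeasure ?M ?P = (\<integral>\<^sup>+ \<theta>. indicator ?P \<theta> \<partial>?M)"
    by simp
  also have "\<dots> = (\<integral>\<^sup>+ \<theta>. (\<integral>\<^sup>+ y. indicator ?P (\<theta>(i := y)) \<partial>lborel) \<partial>PiM J (\<lambda>_. lborel))"
    unfolding IJ(1) by (rule product_nn_integral_insert) (use IJ P_sets in auto)
  also have "\<dots> = (\<integral>\<^sup>+ \<theta>. 0 \<partial>PiM J (\<lambda>_. lborel :: real measure))"
    by (rule nn_integral_cong) (rule line_null)
  also have "\<dots> = 0"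
    by simp
  finally show ?thesis by (simp add: null_sets_def)
qed

lemma null_sets_PiM_lborel_nontrivial_line_zeros:
  fixes f :: "('i \<Rightarrow> real) \<Rightarrow> real"
  assumes "finite I" "i \<in> I"
    and "f \<in> borel_measurable (PiM I (\<lambda>_. lborel))"
    and poly: "\<And>\<theta>. \<theta> \<in> space (PiM I (\<lambda>_. lborel)) \<Longrightarrow> \<exists>p. \<forall>y. f (\<theta>(i := y)) = poly p y"
  shows "space (PiM I (\<lambda>_. lborel)) \<inter> nontrivial_line_zeros f i \<in> null_sets (PiM I (\<lambda>_. lborel))"
proof -
  let ?M = "PiM I (\<lambda>_. lborel)"
  have "space ?M \<inter> nontrivial_line_zeros f i =
        (\<Union>n::nat. {\<theta>\<in>space ?M. f \<theta> = 0 \<and> f (\<theta>(i := \<theta> i + real n)) \<noteq> 0})"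
  proof (intro equalityI subsetI)
    fix \<theta> assume \<theta>: "\<theta> \<in> space ?M \<inter> nontrivial_line_zeros f i"
    then obtain p where p: "\<And>y. f (\<theta>(i := y)) = poly p y"
      using poly by blast
    have "p \<noteq> 0"
      using \<theta> by (auto simp: nontrivial_line_zeros_def p)
    then have "finite ((\<lambda>n::nat. \<theta> i + real n) -` {y. poly p y = 0})"
      by (intro finite_vimageI poly_roots_finite) (auto simp: inj_def)
    then obtain n :: nat where "poly p (\<theta> i + real n) \<noteq> 0"
      using ex_new_if_finite[OF infinite_UNIV_nat] by auto
    then show "\<theta> \<in> (\<Union>n::nat. {\<theta>\<in>space ?M. f \<theta> = 0 \<and> f (\<theta>(i := \<theta> i + real n)) \<noteq> 0})"
      using \<theta> by (auto simp: nontrivial_line_zeros_def p)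
  qed (auto simp: nontrivial_line_zeros_def)
  also have "\<dots> \<in> null_sets ?M"
    by (intro null_sets_UN null_sets_PiM_lborel_zero_shift_nonzero assms)
  finally show ?thesis .
qed

lemma finite_cells [simp]: "finite (cells k)"
  by (simp add: cells_def)

lemma null_sets_param_lebesgue_nontrivial_line_zeros:
  assumes "i \<in> param_index k" and "f \<in> borel_measurable (param_lebesgue k)"
    and "\<And>\<theta>. \<theta> \<in> space (param_lebesgue k) \<Longrightarrow> \<exists>p. \<forall>y. f (\<theta>(i := y)) = poly p y"
  shows "space (param_lebesgue k) \<inter> nontrivial_line_zeros f i \<in> null_sets (param_lebesgue k)"
  using assms unfolding param_lebesgue_def
  by (intro null_sets_PiM_lborel_nontrivial_line_zeros) (auto simp: param_index_def)

lemma measurable_param_coordinate [measurable]: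
  "i \<in> param_index k \<Longrightarrow> (\<lambda>\<theta>. \<theta> i) \<in> borel_measurable (param_lebesgue k)"
  unfolding param_lebesgue_def by simp

lemma measurable_pi_of [measurable]: "(\<lambda>\<theta>. pi_of k \<theta> c) \<in> borel_measurable (param_lebesgue k)"
proof (cases "c \<in> cells k - {(k, True)}")
  case True
  then show ?thesis by (simp add: pi_of_def param_index_def)
next
  case False
  have "pi_of k \<theta> c = (if c = (k, True) then 1 - (\<Sum>d\<in>cells k - {(k, True)}. \<theta> (Inl d)) else undefined)"
    if "\<theta> \<in> space (param_lebesgue k)" for \<theta>
    using that False
    by (auto simp: pi_of_def param_lebesgue_def space_PiM PiE_def extensional_def param_index_def)
  moreover have "(\<lambda>\<theta>. if c = (k, True) then 1 - (\<Sum>d\<in>cells k - {(k, True)}. \<theta> (Inl d)) else undefined)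
      \<in> borel_measurable (param_lebesgue k)"
    by (auto simp: param_index_def)
  ultimately show ?thesis
    by (subst measurable_cong) auto
qed

definition pi_of_direction :: "nat \<Rightarrow> nat \<times> bool \<Rightarrow> nat \<times> bool \<Rightarrow> real" where
  "pi_of_direction k j c = indicator {j} c - indicator {(k, True)} c"

lemma pi_of_fun_upd:
  assumes "j \<in> cells k - {(k, True)}"
  shows "pi_of k (\<theta>(Inl j := y)) = (\<lambda>c. pi_of k \<theta> c + (y - \<theta> (Inl j)) * pi_of_direction k j c)"
proof
  fix c
  have "(\<Sum>d\<in>cells k - {(k, True)}. (\<theta>(Inl j := y)) (Inl d))
      = (\<Sum>d\<in>cells k - {(k, True)}. \<theta> (Inl d) + (y - \<theta> (Inl j)) * indicator {j} d)"
    by (rule sum.cong) (auto simp: indicator_def)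
  also have "\<dots> = (\<Sum>d\<in>cells k - {(k, True)}. \<theta> (Inl d)) + (y - \<theta> (Inl j))"
    using assms by (simp add: sum.distrib Collect_conv_if)
  finally show "pi_of k (\<theta>(Inl j := y)) c = pi_of k \<theta> c + (y - \<theta> (Inl j)) * pi_of_direction k j c"
    using assms by (auto simp: pi_of_def pi_of_direction_def)
qed

lemma sum_pi_of_direction:
  "finite S \<Longrightarrow> sum (pi_of_direction k j) S = indicator S j - indicator S (k, True)"
  by (simp add: pi_of_direction_def sum_subtractf indicator_def of_bool_def sum.delta)

lemma sum_pi_of_cells:
  assumes "k \<ge> 1"
  shows "sum (pi_of k \<theta>) (cells k) = 1"
proof -
  have "(k, True) \<in> cells k" using assms by (simp add: cells_def)
  then have "sum (pi_of k \<theta>) (cells k) = pi_of k \<theta> (k, True) + sum (pi_of k \<theta>) (cells k - {(k, True)})"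
    by (simp add: sum.remove)
  also have "sum (pi_of k \<theta>) (cells k - {(k, True)}) = (\<Sum>d\<in>cells k - {(k, True)}. \<theta> (Inl d))"
    by (rule sum.cong) (auto simp: pi_of_def)
  finally show ?thesis by (simp add: pi_of_def)
qed

lemma optimal_exchange:
  assumes opt: "optimal k \<pi> \<gamma> \<rho> \<alpha>"
    and c: "c \<in> cells k" and d: "d \<in> cells k" and "c \<noteq> d"
    and "0 < \<pi> c" "0 < \<pi> d" and "\<alpha> c < 1" "0 < \<alpha> d"
  shows "\<gamma> c \<le> \<gamma> d"
proof -
  have feas: "feasible k \<pi> \<rho> \<alpha>"
    using opt by (simp add: optimal_def)
  define \<epsilon> where "\<epsilon> = min ((1 - \<alpha> c) * \<pi> c) (\<alpha> d * \<pi> d)"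
  define a b where "a = \<epsilon> / \<pi> c" and "b = \<epsilon> / \<pi> d"
  have "0 < \<epsilon>" "0 \<le> a" "a \<le> 1 - \<alpha> c" "0 \<le> b" "b \<le> \<alpha> d"
    using assms by (auto simp: \<epsilon>_def a_def b_def divide_le_eq)
  define \<beta> where "\<beta> x = \<alpha> x + indicator {c} x * a - indicator {d} x * b" for x
  have sum_\<beta>: "(\<Sum>x\<in>cells k. \<beta> x * g x) = (\<Sum>x\<in>cells k. \<alpha> x * g x) + a * g c - b * g d" for g
  proof -
    have "(\<Sum>x\<in>cells k. \<beta> x * g x)
        = (\<Sum>x\<in>cells k. \<alpha> x * g x + indicator {c} x * (a * g x) - indicator {d} x * (b * g x))"
      by (rule sum.cong) (simp_all add: \<beta>_def algebra_simps)
    then show ?thesis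
      using c d by (simp add: sum.distrib sum_subtractf Collect_conv_if)
  qed
  have "feasible k \<pi> \<rho> \<beta>"
  proof -
    have \<alpha>_bounds: "0 \<le> \<alpha> x" "\<alpha> x \<le> 1" if "x \<in> cells k" for x
      using feas that by (simp_all add: feasible_def)
    have "0 \<le> \<beta> x \<and> \<beta> x \<le> 1" if "x \<in> cells k" for x
    proof -
      consider "x = c" | "x = d" | "x \<noteq> c" "x \<noteq> d" by blast
      then show ?thesis
      proof cases
        case 1
        then show ?thesis using \<alpha>_bounds[OF c] \<open>0 \<le> a\<close> \<open>a \<le> 1 - \<alpha> c\<close> \<open>c \<noteq> d\<close> by (simp add: \<beta>_def)
      next
        case 2
        then show ?thesis using \<alpha>_bounds[OF d] \<open>0 \<le> b\<close> \<open>b \<le> \<alpha> d\<close> \<open>c \<noteq> d\<close> by (simp add: \<beta>_def)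
      next
        case 3
        then show ?thesis using \<alpha>_bounds[OF that] by (simp add: \<beta>_def)
      qed
    qed
    moreover have "(\<Sum>x\<in>cells k. \<beta> x * \<pi> x) = \<rho>"
      using sum_\<beta>[of \<pi>] feas assms(5,6) by (simp add: feasible_def a_def b_def)
    ultimately show ?thesis
      by (simp add: feasible_def)
  qed
  then have "welfare k \<pi> \<gamma> \<beta> \<le> welfare k \<pi> \<gamma> \<alpha>"
    using opt by (simp add: optimal_def)
  moreover have "welfare k \<pi> \<gamma> \<beta> = welfare k \<pi> \<gamma> \<alpha> + \<epsilon> * (\<gamma> c - \<gamma> d)"
    using sum_\<beta>[of "\<lambda>x. \<gamma> x * \<pi> x"] assms(5,6)
    by (simp add: welfare_def a_def b_def mult.commute mult.left_commute right_diff_distrib)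
  ultimately show ?thesis
    using \<open>0 < \<epsilon>\<close> by (simp add: mult_le_0_iff)
qed

lemma optimal_fractional_unique:
  assumes "optimal k \<pi> \<gamma> \<rho> \<alpha>" and "inj_on \<gamma> (cells k)" and "\<forall>c\<in>cells k. 0 < \<pi> c"
    and "c \<in> cells k" "0 < \<alpha> c" "\<alpha> c < 1" and "d \<in> cells k" "0 < \<alpha> d" "\<alpha> d < 1"
  shows "c = d"
proof (rule ccontr)
  assume "c \<noteq> d"
  then have "\<gamma> c \<le> \<gamma> d" "\<gamma> d \<le> \<gamma> c"
    using assms by (auto intro!: optimal_exchange)
  then show False
    using assms \<open>c \<noteq> d\<close> by (auto dest: inj_onD)
qed

lemma feasible_fractional_exists:
  assumes feas: "feasible k \<pi> \<rho> \<alpha>" and "\<forall>S\<subseteq>cells k. sum \<pi> S \<noteq> \<rho>"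
  shows "\<exists>c\<in>cells k. 0 < \<alpha> c \<and> \<alpha> c < 1"
proof (rule ccontr)
  assume no_fractional: "\<not> ?thesis"
  define H where "H = {c\<in>cells k. \<alpha> c = 1}"
  have "\<alpha> c = indicator H c" if "c \<in> cells k" for c
  proof -
    have "0 \<le> \<alpha> c" "\<alpha> c \<le> 1"
      using feas that by (auto simp: feasible_def)
    then have "\<alpha> c = 0 \<or> \<alpha> c = 1"
      using no_fractional that by fastforce
    then show ?thesis
      using that by (auto simp: H_def)
  qed
  then have "\<rho> = (\<Sum>c\<in>cells k. indicator H c * \<pi> c)"
    using feas by (simp add: feasible_def)
  also have "\<dots> = sum \<pi> H"
    by (simp add: H_def Int_def)
  finally show False
    using assms(2) H_def by auto
qed

definition disparity :: "nat \<Rightarrow> (nat \<times> bool \<Rightarrow> real) \<Rightarrow> (nat \<times> bool \<Rightarrow> real) \<Rightarrow> real" where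
  "disparity k \<pi> \<beta> = (\<Sum>x=1..k. (\<pi> (x, False) + \<pi> (x, True)) * (\<beta> (x, True) - \<beta> (x, False)))"

lemma masked_iff_disparity: "masked k \<pi> \<alpha> \<longleftrightarrow> disparity k \<pi> \<alpha> = 0"
  by (simp add: masked_def disparity_def)

lemma disparity_add_scaled_left:
  "disparity k (\<lambda>c. \<pi> c + s * v c) \<beta> = disparity k \<pi> \<beta> + s * disparity k v \<beta>"
  unfolding disparity_def sum_distrib_left sum.distrib[symmetric]
  by (rule sum.cong) (simp_all add: algebra_simps)

lemma disparity_diff_left:
  "disparity k (\<lambda>c. v c - w c) \<beta> = disparity k v \<beta> - disparity k w \<beta>"
  unfolding disparity_def sum_subtractf[symmetric]
  by (rule sum.cong) (simp_all add: algebra_simps)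

lemma disparity_add_scaled_right:
  "disparity k \<pi> (\<lambda>c. \<beta> c + s * \<beta>' c) = disparity k \<pi> \<beta> + s * disparity k \<pi> \<beta>'"
  unfolding disparity_def sum_distrib_left sum.distrib[symmetric]
  by (rule sum.cong) (simp_all add: algebra_simps)

lemma disparity_cong_right:
  "(\<And>c. c \<in> cells k \<Longrightarrow> \<beta> c = \<beta>' c) \<Longrightarrow> disparity k \<pi> \<beta> = disparity k \<pi> \<beta>'"
  unfolding disparity_def by (intro sum.cong) (auto simp: cells_def)

lemma disparity_indicator_left:
  assumes "c \<in> cells k"
  shows "disparity k (indicator {c}) \<beta> = \<beta> (fst c, True) - \<beta> (fst c, False)"
proof -
  obtain x b where "c = (x, b)" by fastforce
  have "disparity k (indicator {c}) \<beta> = (\<Sum>x=1..k. indicator {fst c} x * (\<beta> (x, True) - \<beta> (x, False)))"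
    unfolding disparity_def \<open>c = (x, b)\<close> by (intro sum.cong) (auto simp: indicator_def)
  then show ?thesis
    using assms \<open>c = (x, b)\<close> by (simp add: cells_def Collect_conv_if)
qed

lemma disparity_indicator_right:
  assumes "c \<in> cells k"
  shows "disparity k \<pi> (indicator {c}) = (if snd c then 1 else -1) * (\<pi> (fst c, False) + \<pi> (fst c, True))"
proof -
  obtain x b where "c = (x, b)" by fastforce
  have "disparity k \<pi> (indicator {c})
      = (\<Sum>x=1..k. indicator {fst c} x * ((if snd c then 1 else -1) * (\<pi> (x, False) + \<pi> (x, True))))"
    unfolding disparity_def \<open>c = (x, b)\<close> by (intro sum.cong) (auto simp: indicator_def)
  then show ?thesis
    using assms \<open>c = (x, b)\<close> by (simp add: cells_def Collect_conv_if)
qed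

text \<open>\<open>\<pi> c\<close> times the disparity of the vertex that is 1 on \<open>H\<close> and \<open>(\<rho> - \<pi>(H)) / \<pi> c\<close> on \<open>c\<close>;
  clearing the denominator makes it a polynomial in \<open>\<pi>\<close>.\<close>
definition vertex_disparity ::
    "nat \<Rightarrow> real \<Rightarrow> (nat \<times> bool) set \<Rightarrow> nat \<times> bool \<Rightarrow> (nat \<times> bool \<Rightarrow> real) \<Rightarrow> real" where
  "vertex_disparity k \<rho> H c \<pi> =
     \<pi> c * disparity k \<pi> (indicator H) + (\<rho> - sum \<pi> H) * disparity k \<pi> (indicator {c})"

definition vertex_disparity_deriv ::
    "nat \<Rightarrow> real \<Rightarrow> (nat \<times> bool) set \<Rightarrow> nat \<times> bool \<Rightarrow> (nat \<times> bool \<Rightarrow> real) \<Rightarrow> (nat \<times> bool \<Rightarrow> real) \<Rightarrow> real" where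
  "vertex_disparity_deriv k \<rho> H c \<pi> v =
     v c * disparity k \<pi> (indicator H) + \<pi> c * disparity k v (indicator H)
     - sum v H * disparity k \<pi> (indicator {c}) + (\<rho> - sum \<pi> H) * disparity k v (indicator {c})"

lemma vertex_disparity_add_scaled:
  "vertex_disparity k \<rho> H c (\<lambda>d. \<pi> d + s * v d) =
     vertex_disparity k \<rho> H c \<pi> + s * vertex_disparity_deriv k \<rho> H c \<pi> v + s\<^sup>2 * vertex_disparity k 0 H c v"
  by (simp add: vertex_disparity_def vertex_disparity_deriv_def disparity_add_scaled_left
      sum.distrib algebra_simps power2_eq_square flip: sum_distrib_left)

lemma vertex_disparity_deriv_diff:
  "vertex_disparity_deriv k \<rho> H c \<pi> (\<lambda>d. v d - w d) =
     vertex_disparity_deriv k \<rho> H c \<pi> v - vertex_disparity_deriv k \<rho> H c \<pi> w"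
  by (simp add: vertex_disparity_deriv_def disparity_diff_left sum_subtractf algebra_simps)

lemma vertex_disparity_deriv_not_constant:
  assumes "k \<ge> 2" and pos: "\<forall>c\<in>cells k. 0 < \<pi> c"
    and H: "H \<subseteq> cells k" and cs: "cs \<in> cells k" "cs \<notin> H"
    and r: "0 < \<rho> - sum \<pi> H" "\<rho> - sum \<pi> H < \<pi> cs"
  shows "\<exists>c\<in>cells k. \<exists>d\<in>cells k.
           vertex_disparity_deriv k \<rho> H cs \<pi> (indicator {c}) \<noteq> vertex_disparity_deriv k \<rho> H cs \<pi> (indicator {d})"
proof -
  let ?L = "\<lambda>c. vertex_disparity_deriv k \<rho> H cs \<pi> (indicator {c})"
  obtain xs bs where cs_eq: "cs = (xs, bs)" by fastforce
  have xs: "xs \<in> {1..k}" using cs cs_eq by (simp add: cells_def)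
  obtain x where x: "x \<in> {1..k}" "x \<noteq> xs"
    using \<open>k \<ge> 2\<close> by (intro that[of "if xs = 1 then 2 else 1"]) auto
  define \<sigma> :: real where "\<sigma> = (if bs then 1 else -1)"
  define Q where "Q = disparity k \<pi> (indicator {cs})"
  have "Q = \<sigma> * (\<pi> (xs, False) + \<pi> (xs, True))"
    using cs by (simp add: Q_def \<sigma>_def disparity_indicator_right cs_eq)
  moreover have "0 < \<pi> (xs, False)" "0 < \<pi> (xs, True)"
    using pos xs by (auto simp: cells_def)
  ultimately have "Q \<noteq> 0"
    by (simp add: \<sigma>_def)
  have "finite H"
    using H by (rule finite_subset) simp
  have L: "?L c = indicator {cs} c * disparity k \<pi> (indicator H)
      + \<pi> cs * (indicator H (fst c, True) - indicator H (fst c, False)) - indicator H c * Q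
      + (\<rho> - sum \<pi> H) * (indicator {cs} (fst c, True) - indicator {cs} (fst c, False))"
    if "c \<in> cells k" for c
    using that \<open>finite H\<close>
    by (simp add: vertex_disparity_deriv_def disparity_indicator_left Q_def indicator_def of_bool_def sum.delta)
  have x_cells: "(x, b) \<in> cells k" and xs_cells: "(xs, b) \<in> cells k" for b
    using x xs by (simp_all add: cells_def)
  have row_x: "?L (x, b) = \<pi> cs * (indicator H (x, True) - indicator H (x, False)) - indicator H (x, b) * Q" for b
    using L[of "(x, b)"] x by (simp add: cells_def cs_eq)
  show ?thesis
  proof (cases "(x, True) \<in> H \<longleftrightarrow> (x, False) \<in> H")
    case False
    then have "?L (x, True) \<noteq> ?L (x, False)"
      using row_x \<open>Q \<noteq> 0\<close> by (auto simp: indicator_def)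
    then show ?thesis
      using x_cells by blast
  next
    case True
    define p m r where "p = \<pi> cs" and "m = \<pi> (xs, False) + \<pi> (xs, True)" and "r = \<rho> - sum \<pi> H"
    define h u :: real where "h = indicator H (xs, \<not> bs)" and "u = indicator H (x, True)"
    have "indicator H (xs, True) - indicator H (xs, False) = - \<sigma> * h"
      using cs(2) by (cases bs) (simp_all add: cs_eq \<sigma>_def h_def indicator_def)
    then have "?L (xs, \<not> bs) = \<sigma> * (r - p * h) - h * Q"
      using L[of "(xs, \<not> bs)"] xs_cells
      by (cases bs) (simp_all add: cs_eq \<sigma>_def h_def p_def r_def algebra_simps)
    moreover have "?L (x, True) = - u * Q"
      using row_x True by (simp add: u_def indicator_def)
    moreover have "Q = \<sigma> * m"
      using \<open>Q = \<sigma> * (\<pi> (xs, False) + \<pi> (xs, True))\<close> by (simp add: m_def)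
    ultimately have "?L (xs, \<not> bs) - ?L (x, True) = \<sigma> * (r - p * h - (h - u) * m)"
      by (simp add: algebra_simps)
    moreover have "p < m"
      using pos xs_cells by (cases bs) (auto simp: p_def m_def cs_eq)
    then have "r - p * h - (h - u) * m \<noteq> 0"
      using r by (auto simp: h_def u_def r_def p_def indicator_def algebra_simps)
    moreover have "\<sigma> \<noteq> 0"
      by (simp add: \<sigma>_def)
    ultimately have "?L (xs, \<not> bs) \<noteq> ?L (x, True)"
      by (metis mult_eq_0_iff right_minus_eq)
    then show ?thesis
      using x_cells xs_cells by blast
  qed
qed

lemma vertex_disparity_deriv_pi_of_direction:
  assumes "k \<ge> 2" and "\<forall>c\<in>cells k. 0 < \<pi> c"
    and "H \<subseteq> cells k" and "cs \<in> cells k" "cs \<notin> H"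
    and "0 < \<rho> - sum \<pi> H" "\<rho> - sum \<pi> H < \<pi> cs"
  shows "\<exists>j\<in>cells k - {(k, True)}. vertex_disparity_deriv k \<rho> H cs \<pi> (pi_of_direction k j) \<noteq> 0"
proof -
  let ?L = "\<lambda>c. vertex_disparity_deriv k \<rho> H cs \<pi> (indicator {c})"
  obtain c d where "c \<in> cells k" "d \<in> cells k" "?L c \<noteq> ?L d"
    using vertex_disparity_deriv_not_constant[OF assms] by blast
  then obtain j where j: "j \<in> cells k" "?L j \<noteq> ?L (k, True)"
    by metis
  have "vertex_disparity_deriv k \<rho> H cs \<pi> (pi_of_direction k j) = ?L j - ?L (k, True)"
    by (simp add: pi_of_direction_def[abs_def] vertex_disparity_deriv_diff)
  with j show ?thesis
    by (intro bexI[of _ j]) auto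
qed

lemma masked_vertex_disparity_eq_0:
  assumes feas: "feasible k \<pi> \<rho> \<alpha>" and masked: "masked k \<pi> \<alpha>"
    and cs: "cs \<in> cells k" "0 < \<alpha> cs" "\<alpha> cs < 1" and "0 < \<pi> cs"
    and integral: "\<forall>c\<in>cells k - {cs}. \<alpha> c = 0 \<or> \<alpha> c = 1"
  defines "H \<equiv> {c\<in>cells k. \<alpha> c = 1}"
  shows "cs \<notin> H" "0 < \<rho> - sum \<pi> H" "\<rho> - sum \<pi> H < \<pi> cs" "vertex_disparity k \<rho> H cs \<pi> = 0"
proof -
  show "cs \<notin> H"
    using cs by (simp add: H_def)
  have \<alpha>_eq: "\<alpha> c = indicator H c + \<alpha> cs * indicator {cs} c" if "c \<in> cells k" for c
    using that integral cs by (cases "c = cs") (auto simp: H_def indicator_def)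
  have "\<rho> = (\<Sum>c\<in>cells k. indicator H c * \<pi> c + \<alpha> cs * (indicator {cs} c * \<pi> c))"
    using feas \<alpha>_eq by (simp add: feasible_def algebra_simps)
  also have "\<dots> = sum \<pi> H + \<alpha> cs * \<pi> cs"
    using cs by (simp add: sum.distrib H_def Int_absorb1 Collect_conv_if flip: sum_distrib_left)
  finally have r: "\<rho> - sum \<pi> H = \<alpha> cs * \<pi> cs"
    by simp
  then show "0 < \<rho> - sum \<pi> H" "\<rho> - sum \<pi> H < \<pi> cs"
    using cs \<open>0 < \<pi> cs\<close> by simp_all
  have "disparity k \<pi> \<alpha> = disparity k \<pi> (indicator H) + \<alpha> cs * disparity k \<pi> (indicator {cs})"
    using \<alpha>_eq by (simp add: disparity_add_scaled_right cong: disparity_cong_right)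
  then have "vertex_disparity k \<rho> H cs \<pi> = \<pi> cs * disparity k \<pi> \<alpha>"
    by (simp add: vertex_disparity_def r algebra_simps)
  with masked show "vertex_disparity k \<rho> H cs \<pi> = 0"
    by (simp add: masked_iff_disparity)
qed

lemma optimal_unique_fractional:
  assumes "optimal k \<pi> \<gamma> \<rho> \<alpha>" and "\<forall>c\<in>cells k. 0 < \<pi> c"
    and "inj_on \<gamma> (cells k)" and "\<forall>S\<subseteq>cells k. sum \<pi> S \<noteq> \<rho>"
  shows "\<exists>cs\<in>cells k. 0 < \<alpha> cs \<and> \<alpha> cs < 1 \<and> (\<forall>c\<in>cells k - {cs}. \<alpha> c = 0 \<or> \<alpha> c = 1)"
proof -
  have feas: "feasible k \<pi> \<rho> \<alpha>"
    using assms(1) by (simp add: optimal_def)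
  then obtain cs where cs: "cs \<in> cells k" "0 < \<alpha> cs" "\<alpha> cs < 1"
    using feasible_fractional_exists assms(4) by blast
  have "\<alpha> c = 0 \<or> \<alpha> c = 1" if "c \<in> cells k - {cs}" for c
  proof -
    have "0 \<le> \<alpha> c" "\<alpha> c \<le> 1"
      using feas that by (simp_all add: feasible_def)
    moreover have "\<not> (0 < \<alpha> c \<and> \<alpha> c < 1)"
      using optimal_fractional_unique[OF assms(1,3,2) _ _ _ cs] that by blast
    ultimately show ?thesis
      by linarith
  qed
  with cs show ?thesis
    by blast
qed

lemma optimal_not_fair:
  assumes "optimal k \<pi> \<gamma> \<rho> \<alpha>" and "\<forall>c\<in>cells k. 0 < \<pi> c"
    and "inj_on \<gamma> (cells k)" and "\<forall>S\<subseteq>cells k. sum \<pi> S \<noteq> \<rho>"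
  shows "\<not> fair k \<alpha>"
proof
  assume fair: "fair k \<alpha>"
  obtain cs where cs: "cs \<in> cells k" "0 < \<alpha> cs" "\<alpha> cs < 1"
    and integral: "\<forall>c\<in>cells k - {cs}. \<alpha> c = 0 \<or> \<alpha> c = 1"
    using optimal_unique_fractional[OF assms] by blast
  obtain x b where cs_eq: "cs = (x, b)" by fastforce
  then have "(x, \<not> b) \<in> cells k - {cs}" "\<alpha> (x, \<not> b) = \<alpha> cs"
    using cs fair by (cases b; simp add: cells_def fair_def)+
  with integral have "\<alpha> cs = 0 \<or> \<alpha> cs = 1"
    by metis
  with cs show False
    by auto
qed

lemma optimal_masked_vertex_disparity:
  assumes "optimal k \<pi> \<gamma> \<rho> \<alpha>" and "masked k \<pi> \<alpha>" and "\<forall>c\<in>cells k. 0 < \<pi> c"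
    and "inj_on \<gamma> (cells k)" and "\<forall>S\<subseteq>cells k. sum \<pi> S \<noteq> \<rho>"
  shows "\<exists>H cs. H \<subseteq> cells k \<and> cs \<in> cells k \<and> cs \<notin> H \<and> 0 < \<rho> - sum \<pi> H \<and> \<rho> - sum \<pi> H < \<pi> cs
           \<and> vertex_disparity k \<rho> H cs \<pi> = 0"
proof -
  obtain cs where cs: "cs \<in> cells k" "0 < \<alpha> cs" "\<alpha> cs < 1"
    and integral: "\<forall>c\<in>cells k - {cs}. \<alpha> c = 0 \<or> \<alpha> c = 1"
    using optimal_unique_fractional[OF assms(1,3-5)] by blast
  have "feasible k \<pi> \<rho> \<alpha>"
    using assms(1) by (simp add: optimal_def)
  from masked_vertex_disparity_eq_0[OF this assms(2) cs _ integral] cs assms(3)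
  show ?thesis
    by (intro exI[of _ "{c\<in>cells k. \<alpha> c = 1}"] exI[of _ cs]) auto
qed

lemma poly_along_pi_of_line:
  assumes "j \<in> cells k - {(k, True)}"
    and "\<And>s. F (\<lambda>c. pi_of k \<theta> c + s * pi_of_direction k j c) = poly q s"
  shows "F (pi_of k (\<theta>(Inl j := y))) = poly (pcompose q [:- \<theta> (Inl j), 1:]) y"
  using assms by (simp add: pi_of_fun_upd poly_pcompose)

lemma null_sets_gamma_ties:
  "\<exists>N\<in>null_sets (param_lebesgue k).
     {\<theta>\<in>space (param_lebesgue k). \<not> inj_on (gamma_of \<theta>) (cells k)} \<subseteq> N"
proof
  let ?f = "\<lambda>(c, d) \<theta>. \<theta> (Inr c) - \<theta> (Inr d)"
  let ?N = "\<Union>(c, d)\<in>cells k \<times> cells k - Id.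
              space (param_lebesgue k) \<inter> nontrivial_line_zeros (?f (c, d)) (Inr c)"
  show "?N \<in> null_sets (param_lebesgue k)"
  proof (intro null_sets_UN' countable_finite, goal_cases)
    case (2 cd)
    then obtain c d where "cd = (c, d)" "c \<in> cells k" "d \<in> cells k" "c \<noteq> d" by auto
    moreover have "\<exists>p. \<forall>y. ?f (c, d) (\<theta>(Inr c := y)) = poly p y" for \<theta> :: "_ \<Rightarrow> real"
      using \<open>c \<noteq> d\<close> by (intro exI[of _ "[:- \<theta> (Inr d), 1:]"]) simp
    ultimately show ?case
      by (auto intro!: null_sets_param_lebesgue_nontrivial_line_zeros simp: param_index_def)
  qed auto
  show "{\<theta>\<in>space (param_lebesgue k). \<not> inj_on (gamma_of \<theta>) (cells k)} \<subseteq> ?N"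
  proof
    fix \<theta> assume "\<theta> \<in> {\<theta>\<in>space (param_lebesgue k). \<not> inj_on (gamma_of \<theta>) (cells k)}"
    then have \<theta>: "\<theta> \<in> space (param_lebesgue k)" "\<not> inj_on (gamma_of \<theta>) (cells k)"
      by auto
    then obtain c d where cd: "c \<in> cells k" "d \<in> cells k" "c \<noteq> d" "\<theta> (Inr c) = \<theta> (Inr d)"
      unfolding inj_on_def gamma_of_def by blast
    then have "\<theta> \<in> nontrivial_line_zeros (?f (c, d)) (Inr c)"
      unfolding nontrivial_line_zeros_def by (auto intro!: exI[of _ "\<theta> (Inr d) + 1"])
    then show "\<theta> \<in> ?N"
      using \<theta>(1) cd by (intro UN_I[of "(c, d)"]) auto
  qed
qed

lemma null_sets_subset_sums:
  assumes "k \<ge> 1" and "\<rho> \<noteq> 0" and "\<rho> \<noteq> 1"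
  shows "\<exists>N\<in>null_sets (param_lebesgue k).
           {\<theta>\<in>space (param_lebesgue k). \<exists>S\<subseteq>cells k. sum (pi_of k \<theta>) S = \<rho>} \<subseteq> N"
proof
  let ?f = "\<lambda>S \<theta>. sum (pi_of k \<theta>) S - \<rho>"
  let ?N = "\<Union>(S, j)\<in>Pow (cells k) \<times> (cells k - {(k, True)}).
              space (param_lebesgue k) \<inter> nontrivial_line_zeros (?f S) (Inl j)"
  show "?N \<in> null_sets (param_lebesgue k)"
  proof (intro null_sets_UN' countable_finite, goal_cases)
    case (2 Sj)
    then obtain S j where Sj: "Sj = (S, j)" "S \<subseteq> cells k" "j \<in> cells k - {(k, True)}" by auto
    have "\<exists>p. \<forall>y. ?f S (\<theta>(Inl j := y)) = poly p y" for \<theta>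
      using poly_along_pi_of_line[OF Sj(3), of "\<lambda>\<pi>. sum \<pi> S - \<rho>" \<theta>
          "[:sum (pi_of k \<theta>) S - \<rho>, sum (pi_of_direction k j) S:]"]
      by (auto simp: sum.distrib algebra_simps simp flip: sum_distrib_left)
    with Sj show ?case
      by (auto intro!: null_sets_param_lebesgue_nontrivial_line_zeros simp: param_index_def)
  qed auto
  show "{\<theta>\<in>space (param_lebesgue k). \<exists>S\<subseteq>cells k. sum (pi_of k \<theta>) S = \<rho>} \<subseteq> ?N"
  proof
    fix \<theta> assume "\<theta> \<in> {\<theta>\<in>space (param_lebesgue k). \<exists>S\<subseteq>cells k. sum (pi_of k \<theta>) S = \<rho>}"
    then obtain S where \<theta>: "\<theta> \<in> space (param_lebesgue k)" and S: "S \<subseteq> cells k" "sum (pi_of k \<theta>) S = \<rho>"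
      by auto
    have "finite S"
      using S(1) by (rule finite_subset) simp
    have "S \<noteq> {}" "S \<noteq> cells k"
      using S assms sum_pi_of_cells[of k \<theta>] by auto
    then obtain j where j: "j \<in> cells k - {(k, True)}" "indicator S j \<noteq> (indicator S (k, True) :: real)"
    proof (cases "(k, True) \<in> S")
      case True
      with S(1) \<open>S \<noteq> cells k\<close> obtain j where "j \<in> cells k" "j \<notin> S"
        by blast
      with True show ?thesis
        using that[of j] by auto
    next
      case False
      with \<open>S \<noteq> {}\<close> obtain j where "j \<in> S"
        by blast
      with False S(1) show ?thesis
        using that[of j] by auto
    qed
    have "?f S (\<theta>(Inl j := \<theta> (Inl j) + 1)) = indicator S j - indicator S (k, True)"
      using S(2) \<open>finite S\<close> by (simp add: pi_of_fun_upd[OF j(1)] sum.distrib sum_pi_of_direction)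
    then have "\<theta> \<in> nontrivial_line_zeros (?f S) (Inl j)"
      using S(2) j(2) by (auto simp: nontrivial_line_zeros_def intro!: exI[of _ "\<theta> (Inl j) + 1"])
    then show "\<theta> \<in> ?N"
      using \<theta> S(1) j(1) by (intro UN_I[of "(S, j)"]) auto
  qed
qed

definition degenerate :: "nat \<Rightarrow> real \<Rightarrow> ((nat \<times> bool) + (nat \<times> bool) \<Rightarrow> real) set" where
  "degenerate k \<rho> = {\<theta>. \<not> inj_on (gamma_of \<theta>) (cells k) \<or> (\<exists>S\<subseteq>cells k. sum (pi_of k \<theta>) S = \<rho>)}"

lemma null_sets_degenerate:
  assumes "k \<ge> 1" and "\<rho> \<noteq> 0" and "\<rho> \<noteq> 1"
  shows "\<exists>N\<in>null_sets (param_lebesgue k). space (param_lebesgue k) \<inter> degenerate k \<rho> \<subseteq> N"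
proof -
  from null_sets_gamma_ties obtain N\<^sub>\<gamma> where N\<^sub>\<gamma>: "N\<^sub>\<gamma> \<in> null_sets (param_lebesgue k)"
    "{\<theta>\<in>space (param_lebesgue k). \<not> inj_on (gamma_of \<theta>) (cells k)} \<subseteq> N\<^sub>\<gamma>" ..
  from null_sets_subset_sums[OF assms] obtain N\<^sub>\<pi> where N\<^sub>\<pi>: "N\<^sub>\<pi> \<in> null_sets (param_lebesgue k)"
    "{\<theta>\<in>space (param_lebesgue k). \<exists>S\<subseteq>cells k. sum (pi_of k \<theta>) S = \<rho>} \<subseteq> N\<^sub>\<pi>" ..
  have "space (param_lebesgue k) \<inter> degenerate k \<rho> \<subseteq> N\<^sub>\<gamma> \<union> N\<^sub>\<pi>"
    using N\<^sub>\<gamma>(2) N\<^sub>\<pi>(2) unfolding degenerate_def by blast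
  with N\<^sub>\<gamma>(1) N\<^sub>\<pi>(1) show ?thesis
    by blast
qed

definition masking_degenerate :: "nat \<Rightarrow> real \<Rightarrow> ((nat \<times> bool) + (nat \<times> bool) \<Rightarrow> real) set" where
  "masking_degenerate k \<rho> = {\<theta>. (\<forall>c\<in>cells k. 0 < pi_of k \<theta> c) \<and> (\<exists>H cs. H \<subseteq> cells k \<and> cs \<in> cells k \<and> cs \<notin> H
     \<and> 0 < \<rho> - sum (pi_of k \<theta>) H \<and> \<rho> - sum (pi_of k \<theta>) H < pi_of k \<theta> cs
     \<and> vertex_disparity k \<rho> H cs (pi_of k \<theta>) = 0)}"

lemma null_sets_masking_degenerate:
  assumes "k \<ge> 2"
  shows "\<exists>N\<in>null_sets (param_lebesgue k).
           space (param_lebesgue k) \<inter> masking_degenerate k \<rho> \<subseteq> N"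
proof
  let ?f = "\<lambda>H cs \<theta>. vertex_disparity k \<rho> H cs (pi_of k \<theta>)"
  let ?N = "\<Union>(H, cs, j)\<in>Pow (cells k) \<times> cells k \<times> (cells k - {(k, True)}).
              space (param_lebesgue k) \<inter> nontrivial_line_zeros (?f H cs) (Inl j)"
  have line: "?f H cs (\<theta>(Inl j := y)) = poly (pcompose
      [:?f H cs \<theta>, vertex_disparity_deriv k \<rho> H cs (pi_of k \<theta>) (pi_of_direction k j),
        vertex_disparity k 0 H cs (pi_of_direction k j):] [:- \<theta> (Inl j), 1:]) y"
    if "j \<in> cells k - {(k, True)}" for H cs j \<theta> y
    using that by (intro poly_along_pi_of_line)
      (simp_all add: vertex_disparity_add_scaled algebra_simps power2_eq_square)
  show "?N \<in> null_sets (param_lebesgue k)"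
  proof (intro null_sets_UN' countable_finite, goal_cases)
    case (2 x)
    then show ?case
      using line
      by (auto intro!: null_sets_param_lebesgue_nontrivial_line_zeros
          simp: param_index_def vertex_disparity_def disparity_def)
  qed auto
  show "space (param_lebesgue k) \<inter> masking_degenerate k \<rho> \<subseteq> ?N"
  proof
    fix \<theta> assume "\<theta> \<in> space (param_lebesgue k) \<inter> masking_degenerate k \<rho>"
    then obtain H cs where \<theta>: "\<theta> \<in> space (param_lebesgue k)" "\<forall>c\<in>cells k. 0 < pi_of k \<theta> c"
      and Hcs: "H \<subseteq> cells k" "cs \<in> cells k" "cs \<notin> H"
      and r: "0 < \<rho> - sum (pi_of k \<theta>) H" "\<rho> - sum (pi_of k \<theta>) H < pi_of k \<theta> cs"
      and zero: "?f H cs \<theta> = 0"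
      by (auto simp: masking_degenerate_def)
    obtain j where j: "j \<in> cells k - {(k, True)}"
      and deriv: "vertex_disparity_deriv k \<rho> H cs (pi_of k \<theta>) (pi_of_direction k j) \<noteq> 0"
      using vertex_disparity_deriv_pi_of_direction[OF assms \<theta>(2) Hcs r] by blast
    let ?p = "[:0, vertex_disparity_deriv k \<rho> H cs (pi_of k \<theta>) (pi_of_direction k j),
                vertex_disparity k 0 H cs (pi_of_direction k j):]"
    have "?p \<noteq> 0"
      using deriv by simp
    then obtain s where "poly ?p s \<noteq> 0"
      using poly_all_0_iff_0 by blast
    then have "?f H cs (\<theta>(Inl j := \<theta> (Inl j) + s)) \<noteq> 0"
      using line[OF j, of H cs \<theta>] zero by (simp add: poly_pcompose)
    then have "\<theta> \<in> nontrivial_line_zeros (?f H cs) (Inl j)"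
      using zero by (auto simp: nontrivial_line_zeros_def)
    then show "\<theta> \<in> ?N"
      using \<theta>(1) Hcs j by (intro UN_I[of "(H, cs, j)"]) auto
  qed
qed

lemma fair_optimal_degenerate:
  assumes "Theta k (pi_of k \<theta>) (gamma_of \<theta>)" and "optimal k (pi_of k \<theta>) (gamma_of \<theta>) \<rho> \<alpha>"
    and "fair k \<alpha>"
  shows "\<theta> \<in> degenerate k \<rho>"
  using optimal_not_fair[OF assms(2)] assms(1,3) by (auto simp: degenerate_def Theta_def)

lemma masked_optimal_degenerate:
  assumes "Theta k (pi_of k \<theta>) (gamma_of \<theta>)" and "optimal k (pi_of k \<theta>) (gamma_of \<theta>) \<rho> \<alpha>"
    and "masked k (pi_of k \<theta>) \<alpha>"
  shows "\<theta> \<in> degenerate k \<rho> \<union> masking_degenerate k \<rho>"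
proof -
  have "\<forall>c\<in>cells k. 0 < pi_of k \<theta> c"
    using assms(1) by (simp add: Theta_def)
  with optimal_masked_vertex_disparity[OF assms(2,3) this] show ?thesis
    by (auto simp: degenerate_def masking_degenerate_def)
qed

theorem mainTheorem7:
  fixes k :: nat and \<rho> :: real
  assumes "k \<ge> 2" and "0 < \<rho>" and "\<rho> < 1"
  shows "(\<exists>N\<in>null_sets (param_lebesgue k).
            {\<theta>\<in>space (param_lebesgue k). Theta k (pi_of k \<theta>) (gamma_of \<theta>) \<and>
               (\<exists>\<alpha>. optimal k (pi_of k \<theta>) (gamma_of \<theta>) \<rho> \<alpha> \<and> fair k \<alpha>)} \<subseteq> N)
       \<and> (\<exists>N\<in>null_sets (param_lebesgue k).
            {\<theta>\<in>space (param_lebesgue k). Theta k (pi_of k \<theta>) (gamma_of \<theta>) \<and>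
               (\<exists>\<alpha>. optimal k (pi_of k \<theta>) (gamma_of \<theta>) \<rho> \<alpha> \<and> masked k (pi_of k \<theta>) \<alpha>)} \<subseteq> N)"
proof -
  have "k \<ge> 1" "\<rho> \<noteq> 0" "\<rho> \<noteq> 1"
    using assms by simp_all
  from null_sets_degenerate[OF this] obtain N where N: "N \<in> null_sets (param_lebesgue k)"
    "space (param_lebesgue k) \<inter> degenerate k \<rho> \<subseteq> N" ..
  from null_sets_masking_degenerate[OF assms(1)] obtain N\<^sub>m where N\<^sub>m: "N\<^sub>m \<in> null_sets (param_lebesgue k)"
    "space (param_lebesgue k) \<inter> masking_degenerate k \<rho> \<subseteq> N\<^sub>m" ..
  show ?thesis
    using N N\<^sub>m fair_optimal_degenerate masked_optimal_degenerate
    by (intro conjI bexI[of _ N] bexI[of _ "N \<union> N\<^sub>m"] null_sets.Un subsetI) blast+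
qed

end
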